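(* Under the three-receiver coding module below, at the beginning of any slot $t>0$, at least one of the two receivers not labeled $L$ has an empty unsolved set, i.e., satisfies $H_i=D_i$.
   Context: A sender broadcasts packets $\mathbf{p}_1,\mathbf{p}_2,\dots$ (indexed by arrival order, vectors over $\mathbb{F}_3$) to three receivers $1,2,3$ over a slotted erasure broadcast channel; each slot it transmits at most one linear combination of arrived packets, each receiver either receives it or suffers an erasure, and perfect feedback gives the sender every receiver's knowledge. The rank of a receiver is the dimension of the space of linear combinations it knows. Receiver $i$ has heard of a packet if it knows some linear combination involving that packet (with nonzero coefficient); $H_i$ is the set of packets it has heard of and $D_i$ the set it has decoded; $H_i\setminus D_i$ is its unsolved set. "Oldest" means smallest index. Coding module: labels $L,N,D$ form a permutation of $\{1,2,3\}$; initially $L=1,N=2,D=3,m=0$. Each slot: let $U=\{\mathbf{p}_1,\dots,\mathbf{p}_m\}$ together with $\mathbf{p}_{m+1}$ if it has arrived, and set $S_1=D_N\cap D_D$, $S_2=D_N\cap(H_D\setminus D_D)$, $S_3=D_N\setminus H_D$, $S_4=D_D\setminus D_N$, $S_5=(H_D\setminus D_D)\setminus D_N$, $S_6=U\setminus(H_D\cup D_N)$. Transmit: Case 1 ($\mathbf{p}_{m+1}$ not arrived): if $S_2,S_4$ both nonempty send the sum of their oldest packets; else if $S_3,S_4$ both nonempty send the sum of their oldest packets; else send the oldest packet of the first nonempty set among $S_5,S_6,S_2,S_3,S_4$; if all are empty send nothing. Case 2 ($\mathbf{p}_{m+1}\in S_1$): send $\mathbf{p}_{m+1}$ plus whatever Case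 1 would send. Case 3 ($\mathbf{p}_{m+1}\in S_2$): send $\mathbf{p}_{m+1}+c\mathbf{p}$ with $\mathbf{p}$ the oldest packet of the first nonempty set among $S_4,S_5,S_6$, where $c=1$ unless $\mathbf{p}\in S_5$, in which case $c\in\{1,2\}$ is chosen so that the combination is innovative to receiver $D$. Case 4 ($\mathbf{p}_{m+1}\in S_3$): send $\mathbf{p}_{m+1}+\mathbf{p}$, $\mathbf{p}$ the oldest packet of the first nonempty set among $S_4,S_5,S_6$. Case 5 ($\mathbf{p}_{m+1}\in S_4$): send $\mathbf{p}_{m+1}+\mathbf{p}$, $\mathbf{p}$ the oldest packet of the first nonempty set among $S_2,S_3,S_6$. (In Cases 3–5, if all listed sets are empty, $\mathbf{p}_{m+1}$ is sent alone.) Case 6 (otherwise): send $\mathbf{p}_{m+1}$. After feedback, update $H_i,D_i$, set $m$ to the maximum rank of the three receivers; among receivers that have decoded all of $\mathbf{p}_1,\dots,\mathbf{p}_m$, label the one with lowest index $L$ (if there is none, assign labels arbitrarily); of the other two receivers, if exactly one has nonempty unsolved set, label it $D$ and the other $N$; otherwise assign $D,N$ arbitrarily. *)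

theory Defs
  imports Main "HOL-Library.Numeral_Type"
begin

text \<open>Coefficients are in F_3, realised as the numeral type 3 (integers mod 3).
  A linear combination of packets is a coefficient vector indexed by packet
  numbers 1,2,3,... (index 0 is unused).  Receivers are the numbers 1,2,3.\<close>

type_synonym vec = "nat \<Rightarrow> 3"

definition zerov :: vec where "zerov = (\<lambda>_. 0)"
definition unitv :: "nat \<Rightarrow> vec" where "unitv j = (\<lambda>k. if k = j then 1 else 0)"
definition vadd :: "vec \<Rightarrow> vec \<Rightarrow> vec" where "vadd v w = (\<lambda>k. v k + w k)"
definition smul :: "3 \<Rightarrow> vec \<Rightarrow> vec" where "smul c v = (\<lambda>k. c * v k)"

inductive_set lspan :: "vec set \<Rightarrow> vec set" for S where
  zero: "zerov \<in> lspan S"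
| add: "v \<in> S \<Longrightarrow> w \<in> lspan S \<Longrightarrow> vadd (smul c v) w \<in> lspan S"

definition lin_indep :: "vec set \<Rightarrow> bool" where
  "lin_indep B \<longleftrightarrow> finite B \<and>
     (\<forall>c :: vec \<Rightarrow> 3. (\<forall>k. (\<Sum>b\<in>B. c b * b k) = 0) \<longrightarrow> (\<forall>b\<in>B. c b = 0))"

definition rank :: "vec set \<Rightarrow> nat" where
  "rank K = Max {card B | B. B \<subseteq> K \<and> lin_indep B}"

definition heard :: "vec set \<Rightarrow> nat set" where
  "heard K = {j. \<exists>v\<in>K. v j \<noteq> 0}"

definition decoded :: "vec set \<Rightarrow> nat set" where
  "decoded K = {j. unitv j \<in> K}"

definition unsolved :: "vec set \<Rightarrow> nat set" where
  "unsolved K = heard K - decoded K"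

record state =
  know :: "nat \<Rightarrow> vec set"
  lL :: nat
  lN :: nat
  lD :: nat
  mm :: nat

definition init_state :: state where
  "init_state = \<lparr>know = (\<lambda>_. lspan {}), lL = 1, lN = 2, lD = 3, mm = 0\<rparr>"

fun first_nonempty :: "nat set list \<Rightarrow> nat set option" where
  "first_nonempty [] = None"
| "first_nonempty (A # As) = (if A \<noteq> {} then Some A else first_nonempty As)"

text \<open>The sets S_1..S_6 (arr = whether p_(m+1) has arrived).\<close>
definition Sets :: "state \<Rightarrow> bool \<Rightarrow> nat set list" where
  "Sets s arr =
    (let m = mm s;
         DN = decoded (know s (lN s));
         DD = decoded (know s (lD s));
         HD = heard (know s (lD s));
         U = {1..m} \<union> (if arr then {m+1} else {})
     in [DN \<inter> DD, DN \<inter> (HD - DD), DN - HD, DD - DN, (HD - DD) - DN, U - (HD \<union> DN)])"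

definition case1 :: "nat set list \<Rightarrow> vec option" where
  "case1 S =
    (let S2 = S!1; S3 = S!2; S4 = S!3; S5 = S!4; S6 = S!5 in
     if S2 \<noteq> {} \<and> S4 \<noteq> {} then Some (vadd (unitv (Min S2)) (unitv (Min S4)))
     else if S3 \<noteq> {} \<and> S4 \<noteq> {} then Some (vadd (unitv (Min S3)) (unitv (Min S4)))
     else (case first_nonempty [S5, S6, S2, S3, S4] of
             None \<Rightarrow> None
           | Some A \<Rightarrow> Some (unitv (Min A))))"

text \<open>All transmissions allowed by the coding module (the choice of c in Case 3
  is the only nondeterminism).\<close>
definition transmissions :: "state \<Rightarrow> bool \<Rightarrow> vec option set" where
  "transmissions s arr =
    (let S = Sets s arr; S1 = S!0; S2 = S!1; S3 = S!2; S4 = S!3; S5 = S!4; S6 = S!5;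
         q = mm s + 1; eq = unitv q; KD = know s (lD s)
     in if \<not> arr then {case1 S}
        else if q \<in> S1 then
          {Some (case case1 S of None \<Rightarrow> eq | Some w \<Rightarrow> vadd eq w)}
        else if q \<in> S2 then
          (case first_nonempty [S4, S5, S6] of
             None \<Rightarrow> {Some eq}
           | Some A \<Rightarrow>
               {Some (vadd eq (smul c (unitv (Min A)))) | c.
                  if Min A \<in> S5
                  then (c = 1 \<or> c = 2) \<and> vadd eq (smul c (unitv (Min A))) \<notin> KD
                  else c = 1})
        else if q \<in> S3 then
          (case first_nonempty [S4, S5, S6] of
             None \<Rightarrow> {Some eq}
           | Some A \<Rightarrow> {Some (vadd eq (unitv (Min A)))})
        else if q \<in> S4 then
          (case first_nonempty [S2, S3, S6] of
             None \<Rightarrow> {Some eq}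
           | Some A \<Rightarrow> {Some (vadd eq (unitv (Min A)))})
        else {Some eq})"

definition labels_ok :: "(nat \<Rightarrow> vec set) \<Rightarrow> nat \<Rightarrow> nat \<Rightarrow> nat \<Rightarrow> nat \<Rightarrow> bool" where
  "labels_ok K m l n d \<longleftrightarrow>
     {l, n, d} = {1, 2, 3} \<and>
     (let C = {i \<in> {1, 2, 3}. {1..m} \<subseteq> decoded (K i)} in C \<noteq> {} \<longrightarrow> l = Min C) \<and>
     \<not> (unsolved (K n) \<noteq> {} \<and> unsolved (K d) = {})"

text \<open>One slot: arrived = number of packets arrived by this slot,
  rcv i = receiver i receives (no erasure) in this slot.\<close>
definition step :: "nat \<Rightarrow> (nat \<Rightarrow> bool) \<Rightarrow> state \<Rightarrow> state \<Rightarrow> bool" where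
  "step arrived rcv s s' \<longleftrightarrow>
     (\<exists>v \<in> transmissions s (mm s + 1 \<le> arrived).
        know s' = (\<lambda>i. case v of None \<Rightarrow> know s i
                                | Some w \<Rightarrow> if rcv i then lspan (insert w (know s i)) else know s i) \<and>
        mm s' = Max ((\<lambda>i. rank (know s' i)) ` {1, 2, 3}) \<and>
        labels_ok (know s') (mm s') (lL s') (lN s') (lD s'))"

end

theory Submission
  imports Defs "HOL-Library.FuncSet"
begin

text \<open>
  Receivers only ever hear of packets p_1, ..., p_(m+1), and L has decoded p_1, ..., p_m, so L
  is always solved (empty unsolved set).  The invariant carried from slot to slot is that N is
  solved and that the pooled knowledge of N and D is solved.  Every combination the module sends
  involves at most one packet not decoded by N, except in Case 5 with S_2 = S_3 = {}, where it
  involves at most one packet not decoded by D; but if S_2 is empty, solvedness of N and of the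
  pool forces D to be solved already.  Receiving a combination with at most one unknown packet
  keeps a solved space solved, so after the slot one of N, D and their pool are still solved.
  Relabelling either keeps the pair {N, D}, or brings in the old L, whose prefix knowledge makes
  the new pool solved; finally the labelling rule names a solved receiver N.
\<close>

section \<open>Linear combinations over F_3\<close>

lemma nonzero_mod3_square: "(x::3) \<noteq> 0 \<Longrightarrow> x * x = 1"
proof (cases x)
  case (of_int z)
  then have "z = 0 \<or> z = 1 \<or> z = 2" by auto
  moreover assume "x \<noteq> 0"
  ultimately show ?thesis using of_int by auto
qed

definition supp :: "vec \<Rightarrow> nat set" where
  "supp v = {k. v k \<noteq> 0}"

definition subspace :: "vec set \<Rightarrow> bool" where
  "subspace K \<longleftrightarrow> zerov \<in> K \<and> (\<forall>v\<in>K. \<forall>w\<in>K. vadd v w \<in> K) \<and> (\<forall>c. \<forall>v\<in>K. smul c v \<in> K)"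

lemma vadd_zerov [simp]: "vadd zerov w = w"
  by (simp add: vadd_def zerov_def)

lemma smul_one [simp]: "smul 1 v = v"
  by (simp add: smul_def)

lemma supp_zerov [simp]: "supp zerov = {}"
  by (simp add: supp_def zerov_def)

lemma supp_unitv [simp]: "supp (unitv j) = {j}"
  by (simp add: supp_def unitv_def)

lemma supp_vadd: "supp (vadd v w) \<subseteq> supp v \<union> supp w"
  by (auto simp: supp_def vadd_def)

lemma supp_smul: "supp (smul c v) \<subseteq> supp v"
  by (auto simp: supp_def smul_def)

lemma supp_vadd_unitv: "supp (vadd (unitv a) v) \<subseteq> insert a (supp v)"
  using supp_vadd[of "unitv a" v] by simp

lemma supp_unitv_unitv: "supp (vadd (unitv a) (unitv b)) \<subseteq> {a, b}"
  using supp_vadd[of "unitv a" "unitv b"] by auto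

lemma supp_unitv_pair: "supp (vadd (unitv a) (smul c (unitv b))) \<subseteq> {a, b}"
  using supp_vadd_unitv[of a "smul c (unitv b)"] supp_smul[of c "unitv b"] by auto

lemma lspan_vadd: "v \<in> lspan S \<Longrightarrow> w \<in> lspan S \<Longrightarrow> vadd v w \<in> lspan S"
proof (induction v rule: lspan.induct)
  case (add x u c)
  have "vadd (vadd (smul c x) u) w = vadd (smul c x) (vadd u w)"
    by (simp add: vadd_def add.assoc)
  then show ?case using add by (auto intro: lspan.add)
qed simp

lemma lspan_smul: "v \<in> lspan S \<Longrightarrow> smul c v \<in> lspan S"
proof (induction v rule: lspan.induct)
  case zero
  have "smul c zerov = zerov" by (simp add: smul_def zerov_def)
  then show ?case by (simp add: lspan.zero)
next
  case (add x u d)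
  have "smul c (vadd (smul d x) u) = vadd (smul (c * d) x) (smul c u)"
    by (simp add: vadd_def smul_def algebra_simps)
  then show ?case using add by (auto intro: lspan.add)
qed

lemma subspace_lspan: "subspace (lspan S)"
  unfolding subspace_def by (auto intro: lspan.zero lspan_vadd lspan_smul)

lemma lspan_superset: "S \<subseteq> lspan S"
proof
  fix v assume "v \<in> S"
  have "vadd (smul 1 v) zerov = v" by (simp add: vadd_def smul_def zerov_def)
  then show "v \<in> lspan S" using lspan.add[OF \<open>v \<in> S\<close> lspan.zero, of 1] by simp
qed

lemma lspan_least: "subspace T \<Longrightarrow> S \<subseteq> T \<Longrightarrow> lspan S \<subseteq> T"
proof
  fix v assume T: "subspace T" "S \<subseteq> T" and "v \<in> lspan S"
  from this(3) show "v \<in> T"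
    by (induction v rule: lspan.induct) (use T in \<open>auto simp: subspace_def\<close>)
qed

lemma lspan_Un_decompose:
  assumes "subspace A" "subspace B" "v \<in> lspan (A \<union> B)"
  obtains a b where "a \<in> A" "b \<in> B" "v = vadd a b"
proof -
  from assms(3) have "\<exists>a\<in>A. \<exists>b\<in>B. v = vadd a b"
  proof (induction v rule: lspan.induct)
    case zero
    show ?case using assms(1,2) by (intro bexI[of _ zerov]) (auto simp: subspace_def)
  next
    case (add u r c)
    then obtain a b where ab: "a \<in> A" "b \<in> B" "r = vadd a b" by blast
    have "vadd (smul c u) r = vadd (vadd (smul c u) a) b"
      and "vadd (smul c u) r = vadd a (vadd (smul c u) b)"
      by (simp_all add: ab vadd_def algebra_simps)
    then show ?case using add.hyps ab assms(1,2) unfolding subspace_def by blast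
  qed
  then show thesis using that by blast
qed

lemma heard_lspan [simp]: "heard (lspan S) = heard S"
proof
  show "heard (lspan S) \<subseteq> heard S"
  proof
    fix k assume "k \<in> heard (lspan S)"
    then obtain v where "v \<in> lspan S" "v k \<noteq> 0" by (auto simp: heard_def)
    then show "k \<in> heard S"
    proof (induction v rule: lspan.induct)
      case (add x u c)
      then show ?case by (cases "x k = 0") (auto simp: heard_def vadd_def smul_def)
    qed (simp add: zerov_def)
  qed
  show "heard S \<subseteq> heard (lspan S)" using lspan_superset by (auto simp: heard_def)
qed

lemma heard_Un [simp]: "heard (A \<union> B) = heard A \<union> heard B"
  by (auto simp: heard_def)

lemma heard_insert [simp]: "heard (insert w A) = supp w \<union> heard A"
  by (auto simp: heard_def supp_def)

lemma heard_empty [simp]: "heard {} = {}"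
  by (simp add: heard_def)

lemma supp_subset_heard: "v \<in> K \<Longrightarrow> supp v \<subseteq> heard K"
  by (auto simp: heard_def supp_def)

lemma decoded_mono: "A \<subseteq> B \<Longrightarrow> decoded A \<subseteq> decoded B"
  by (auto simp: decoded_def)

lemma decoded_subset_heard: "decoded K \<subseteq> heard K"
  by (auto simp: decoded_def heard_def unitv_def intro!: bexI)

lemma unsolved_empty_iff: "unsolved K = {} \<longleftrightarrow> heard K \<subseteq> decoded K"
  by (auto simp: unsolved_def)

section \<open>Decoding and solved knowledge spaces\<close>

lemma decode_packet:
  assumes K: "subspace K" and F: "finite F"
    and "v \<in> K" "supp v \<subseteq> insert j F" "F \<subseteq> decoded K" "v j \<noteq> 0"
  shows "j \<in> decoded K"
  using F assms(3-6)
proof (induction F arbitrary: v rule: finite_induct)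
  case empty
  have "unitv j = smul (v j) v"
  proof
    fix k show "unitv j k = smul (v j) v k"
    proof (cases "k = j")
      case False
      then have "v k = 0" using empty.prems(2) by (auto simp: supp_def)
      then show ?thesis using False by (simp add: unitv_def smul_def)
    qed (use empty.prems(4) nonzero_mod3_square in \<open>simp add: unitv_def smul_def\<close>)
  qed
  then show ?case using K empty by (simp add: subspace_def decoded_def)
next
  case (insert i F)
  show ?case
  proof (cases "i = j")
    case True
    then show ?thesis using insert by auto
  next
    case False
    define v' where "v' = vadd v (smul (- v i) (unitv i))"
    have "v' \<in> K" using K insert by (simp add: subspace_def v'_def decoded_def)
    moreover have "supp v' \<subseteq> insert j F"
      using insert.prems(2) by (auto simp: supp_def v'_def vadd_def smul_def unitv_def)
    moreover have "v' j \<noteq> 0"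
      using False insert.prems(4) by (simp add: v'_def vadd_def smul_def unitv_def)
    ultimately show ?thesis using insert by auto
  qed
qed

lemma heard_subset_decoded_if_prefix_decoded:
  assumes K: "subspace K" and "heard K \<subseteq> {1..n+1}" and "{1..n} \<subseteq> decoded K"
  shows "heard K \<subseteq> decoded K"
proof
  fix j assume j: "j \<in> heard K"
  show "j \<in> decoded K"
  proof (cases "j \<le> n")
    case True
    then have "j \<in> {1..n}" using j assms(2) by auto
    then show ?thesis using assms(3) by blast
  next
    case False
    then have "j = n + 1" using j assms(2) by auto
    obtain v where v: "v \<in> K" "v j \<noteq> 0" using j by (auto simp: heard_def)
    have "supp v \<subseteq> insert j {1..n}"
      using supp_subset_heard[OF v(1)] assms(2) \<open>j = n + 1\<close> by auto
    then show ?thesis using decode_packet[OF K _ v(1) _ assms(3) v(2)] by simp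
  qed
qed

definition at_most_one_outside :: "nat set \<Rightarrow> vec \<Rightarrow> bool" where
  "at_most_one_outside A w \<longleftrightarrow> (\<exists>x. supp w \<subseteq> insert x A)"

lemma at_most_one_outside_mono:
  "at_most_one_outside A w \<Longrightarrow> A \<subseteq> B \<Longrightarrow> at_most_one_outside B w"
  unfolding at_most_one_outside_def by blast

lemma at_most_one_outside_pair:
  "supp w \<subseteq> {a, b} \<Longrightarrow> a \<in> A \<or> b \<in> A \<Longrightarrow> at_most_one_outside A w"
  unfolding at_most_one_outside_def by blast

lemma at_most_one_outside_single: "supp w \<subseteq> {a} \<Longrightarrow> at_most_one_outside A w"
  unfolding at_most_one_outside_def by blast

lemma at_most_one_outside_vadd_unitv:
  "at_most_one_outside A w \<Longrightarrow> a \<in> A \<Longrightarrow> at_most_one_outside A (vadd (unitv a) w)"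
  using supp_vadd_unitv[of a w] unfolding at_most_one_outside_def by blast

lemma pure_extend:
  assumes pure: "heard K \<subseteq> decoded K" and "K \<subseteq> K'" "subspace K'" "w \<in> K'"
    and heard': "heard K' \<subseteq> heard K \<union> supp w"
    and "finite (supp w)" and "at_most_one_outside (heard K) w"
  shows "heard K' \<subseteq> decoded K'"
proof
  fix j assume j: "j \<in> heard K'"
  have old: "heard K \<subseteq> decoded K'" using pure decoded_mono[OF \<open>K \<subseteq> K'\<close>] by blast
  show "j \<in> decoded K'"
  proof (cases "j \<in> heard K")
    case True then show ?thesis using old by blast
  next
    case False
    then have "j \<in> supp w" using j heard' by blast
    moreover obtain x where "supp w \<subseteq> insert x (heard K)"
      using \<open>at_most_one_outside (heard K) w\<close> by (auto simp: at_most_one_outside_def)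
    ultimately have "supp w \<subseteq> insert j (supp w - {j})" "supp w - {j} \<subseteq> decoded K'"
      using False old by auto
    then show ?thesis
      using decode_packet[of K' "supp w - {j}" w j] assms(3,4,6) \<open>j \<in> supp w\<close>
      by (auto simp: supp_def)
  qed
qed

lemma pure_lspan_insert:
  assumes "heard K \<subseteq> decoded K" "finite (supp w)" "at_most_one_outside (heard K) w"
  shows "heard (lspan (insert w K)) \<subseteq> decoded (lspan (insert w K))"
  using lspan_superset[of "insert w K"]
  by (intro pure_extend[OF assms(1) _ subspace_lspan _ _ assms(2,3)]) auto

lemma joint_pure_after_broadcast:
  assumes pure: "heard (lspan (A \<union> B)) \<subseteq> decoded (lspan (A \<union> B))"
    and A': "A' = A \<or> A' = lspan (insert w A)" and B': "B' = B \<or> B' = lspan (insert w B)"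
    and "finite (supp w)" and "at_most_one_outside (heard A \<union> heard B) w"
  shows "heard (lspan (A' \<union> B')) \<subseteq> decoded (lspan (A' \<union> B'))"
proof (cases "A' = A \<and> B' = B")
  case True then show ?thesis using pure by simp
next
  case False
  have "A \<subseteq> A'" "B \<subseteq> B'" using A' B' lspan_superset by blast+
  then have "lspan (A \<union> B) \<subseteq> lspan (A' \<union> B')"
    by (intro lspan_least[OF subspace_lspan]) (use lspan_superset in blast)
  moreover have "w \<in> lspan (A' \<union> B')"
    using False A' B' lspan_superset[of "A' \<union> B'"] lspan_superset[of "insert w A"]
      lspan_superset[of "insert w B"] by blast
  moreover have "heard (lspan (A' \<union> B')) \<subseteq> heard (lspan (A \<union> B)) \<union> supp w"
    using A' B' by auto
  moreover have "at_most_one_outside (heard (lspan (A \<union> B))) w" using assms(5) by simp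
  ultimately show ?thesis
    using pure_extend[OF pure _ subspace_lspan _ _ assms(4)] by blast
qed

lemma pure_if_decoded_disjoint_unsolved:
  assumes KN: "subspace KN" and KD: "subspace KD"
    and pureN: "heard KN \<subseteq> decoded KN" and fin: "finite (heard KN)"
    and pure: "heard (lspan (KN \<union> KD)) \<subseteq> decoded (lspan (KN \<union> KD))"
    and disj: "decoded KN \<inter> (heard KD - decoded KD) = {}"
  shows "heard KD \<subseteq> decoded KD"
proof
  fix j assume jH: "j \<in> heard KD"
  show "j \<in> decoded KD"
  proof (rule ccontr)
    assume jD: "j \<notin> decoded KD"
    then have jN: "j \<notin> heard KN" using jH disj pureN by blast
    have "unitv j \<in> lspan (KN \<union> KD)" using jH pure by (auto simp: decoded_def)
    then obtain a b where ab: "a \<in> KN" "b \<in> KD" "unitv j = vadd a b"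
      using lspan_Un_decompose[OF KN KD] by blast
    \<comment> \<open>outside packet j, b must cancel a, so it only involves packets heard (hence decoded) by N\<close>
    have "a j = 0" using ab(1) jN by (auto simp: heard_def)
    then have bj: "b j \<noteq> 0" using fun_cong[OF ab(3), of j] by (simp add: unitv_def vadd_def)
    have sb: "supp b - {j} \<subseteq> heard KN"
    proof
      fix i assume i: "i \<in> supp b - {j}"
      then have "a i + b i = 0" "b i \<noteq> 0"
        using fun_cong[OF ab(3), of i] by (auto simp: unitv_def vadd_def supp_def)
      then have "a i \<noteq> 0" by auto
      then show "i \<in> heard KN" using ab(1) by (auto simp: heard_def)
    qed
    moreover have "supp b \<subseteq> heard KD" using ab(2) by (rule supp_subset_heard)
    ultimately have "supp b - {j} \<subseteq> decoded KD" using pureN disj by blast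
    moreover have "finite (supp b - {j})" using sb fin by (rule finite_subset)
    ultimately have "j \<in> decoded KD"
      using decode_packet[OF KD _ ab(2) _ _ bj] by blast
    then show False using jD by simp
  qed
qed

section \<open>Rank\<close>

definition vecs_on :: "nat \<Rightarrow> vec set" where
  "vecs_on n = {v. supp v \<subseteq> {1..n}}"

lemma bij_betw_restrict_vecs_on:
  "bij_betw (\<lambda>v. restrict v {1..n}) (vecs_on n) (PiE {1..n} (\<lambda>_. UNIV))"
proof (rule bij_betw_imageI)
  show "inj_on (\<lambda>v. restrict v {1..n}) (vecs_on n)"
  proof (rule inj_onI)
    fix v w assume "v \<in> vecs_on n" "w \<in> vecs_on n" "restrict v {1..n} = restrict w {1..n}"
    then show "v = w"
      unfolding vecs_on_def supp_def fun_eq_iff restrict_def by (metis (mono_tags) mem_Collect_eq subsetD)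
  qed
  show "(\<lambda>v. restrict v {1..n}) ` vecs_on n = PiE {1..n} (\<lambda>_. UNIV)"
  proof (intro equalityI subsetI)
    fix f :: "nat \<Rightarrow> 3" assume f: "f \<in> PiE {1..n} (\<lambda>_. UNIV)"
    have "(\<lambda>k. if k \<in> {1..n} then f k else 0) \<in> vecs_on n"
      by (auto simp: vecs_on_def supp_def split: if_splits)
    moreover have "f = restrict (\<lambda>k. if k \<in> {1..n} then f k else 0) {1..n}"
      using f by (auto simp: fun_eq_iff restrict_def PiE_def extensional_def)
    ultimately show "f \<in> (\<lambda>v. restrict v {1..n}) ` vecs_on n" by blast
  qed auto
qed

lemma finite_vecs_on: "finite (vecs_on n)"
  and card_vecs_on: "card (vecs_on n) = 3 ^ n"
  using bij_betw_finite[OF bij_betw_restrict_vecs_on] bij_betw_same_card[OF bij_betw_restrict_vecs_on]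
  by (simp_all add: finite_PiE card_PiE)

lemma subset_vecs_on_iff: "K \<subseteq> vecs_on n \<longleftrightarrow> heard K \<subseteq> {1..n}"
  by (auto simp: vecs_on_def heard_def supp_def)

definition lin_comb :: "vec set \<Rightarrow> (vec \<Rightarrow> 3) \<Rightarrow> vec" where
  "lin_comb B c = (\<lambda>k. \<Sum>b\<in>B. c b * b k)"

lemma lin_comb_in_subspace:
  assumes K: "subspace K" shows "finite B \<Longrightarrow> B \<subseteq> K \<Longrightarrow> lin_comb B c \<in> K"
proof (induction B rule: finite_induct)
  case empty
  have "lin_comb {} c = zerov" by (simp add: lin_comb_def zerov_def)
  then show ?case using K by (simp add: subspace_def)
next
  case (insert b B)
  then have "lin_comb (insert b B) c = vadd (smul (c b) b) (lin_comb B c)"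
    by (simp add: lin_comb_def vadd_def smul_def fun_eq_iff)
  then show ?case using insert K by (simp add: subspace_def)
qed

lemma inj_on_lin_comb:
  assumes B: "lin_indep B" shows "inj_on (lin_comb B) (PiE B (\<lambda>_. UNIV))"
proof (rule inj_onI)
  fix f g assume f: "f \<in> PiE B (\<lambda>_. UNIV)" and g: "g \<in> PiE B (\<lambda>_. UNIV)"
    and eq: "lin_comb B f = lin_comb B g"
  have "(\<Sum>b\<in>B. (f b - g b) * b k) = 0" for k
    using fun_cong[OF eq, of k] by (simp add: lin_comb_def algebra_simps sum_subtractf)
  then have "\<forall>b\<in>B. f b - g b = 0"
    using B unfolding lin_indep_def by (elim conjE allE[of _ "\<lambda>b. f b - g b"]) blast
  then show "f = g" by (intro PiE_ext[OF f g]) auto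
qed

text \<open>Counting: an independent set B gives 3^(card B) distinct combinations inside vecs_on n.\<close>
lemma lin_indep_card_le:
  assumes K: "subspace K" "K \<subseteq> vecs_on n" and B: "B \<subseteq> K" "lin_indep B"
  shows "card B \<le> n" and "card B = n \<Longrightarrow> vecs_on n \<subseteq> K"
proof -
  have fin: "finite B" using B(2) by (simp add: lin_indep_def)
  define I where "I = lin_comb B ` PiE B (\<lambda>_. UNIV)"
  have card_I: "card I = 3 ^ card B"
    unfolding I_def by (simp add: card_image[OF inj_on_lin_comb[OF B(2)]] card_PiE fin)
  have "I \<subseteq> K" unfolding I_def using lin_comb_in_subspace[OF K(1) fin B(1)] by blast
  then have IV: "I \<subseteq> vecs_on n" using K(2) by blast
  then have "(3::nat) ^ card B \<le> 3 ^ n"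
    using card_mono[OF finite_vecs_on IV] card_I card_vecs_on by simp
  then show "card B \<le> n" by simp
  assume "card B = n"
  then have "I = vecs_on n"
    using card_subset_eq[OF finite_vecs_on IV] card_I card_vecs_on by simp
  then show "vecs_on n \<subseteq> K" using \<open>I \<subseteq> K\<close> by simp
qed

lemma rank_max_lin_indep:
  assumes "subspace K" "K \<subseteq> vecs_on n"
  shows "\<exists>B. B \<subseteq> K \<and> lin_indep B \<and> rank K = card B"
    and "B \<subseteq> K \<Longrightarrow> lin_indep B \<Longrightarrow> card B \<le> rank K"
proof -
  let ?R = "{card B | B. B \<subseteq> K \<and> lin_indep B}"
  have "?R \<subseteq> {..n}" using lin_indep_card_le[OF assms] by auto
  then have fin: "finite ?R" by (rule finite_subset) simp
  have "lin_indep {}" by (simp add: lin_indep_def)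
  then have "?R \<noteq> {}" by blast
  then show "\<exists>B. B \<subseteq> K \<and> lin_indep B \<and> rank K = card B"
    using Max_in[OF fin] unfolding rank_def by auto
  show "B \<subseteq> K \<Longrightarrow> lin_indep B \<Longrightarrow> card B \<le> rank K"
    using Max_ge[OF fin] unfolding rank_def by blast
qed

lemma lin_indep_unitv: "finite A \<Longrightarrow> lin_indep (unitv ` A)"
proof -
  assume fin: "finite A"
  have inj: "inj_on unitv A" by (auto intro!: inj_onI simp: unitv_def fun_eq_iff split: if_splits)
  have "c (unitv j) = 0"
    if h: "\<forall>k. (\<Sum>b\<in>unitv ` A. c b * b k) = 0" and j: "j \<in> A" for c :: "vec \<Rightarrow> 3" and j
  proof -
    have "(\<Sum>b\<in>unitv ` A. c b * b j) = (\<Sum>i\<in>A. if i = j then c (unitv i) else 0)"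
      by (simp add: sum.reindex[OF inj]) (rule sum.cong, auto simp: unitv_def)
    then show ?thesis using h j fin by simp
  qed
  then show ?thesis using fin by (auto simp: lin_indep_def)
qed

lemma rank_ge_if_prefix_decoded:
  assumes "subspace K" "heard K \<subseteq> {1..n}" "{1..m} \<subseteq> decoded K"
  shows "m \<le> rank K"
proof -
  have "inj_on unitv {1..m}" by (auto intro!: inj_onI simp: unitv_def fun_eq_iff split: if_splits)
  then have "card (unitv ` {1..m}) = m" by (simp add: card_image)
  moreover have "unitv ` {1..m} \<subseteq> K" using assms(3) unfolding decoded_def by blast
  ultimately show ?thesis
    using rank_max_lin_indep(2)[OF assms(1) _ _ lin_indep_unitv] assms(2)
    by (metis finite_atLeastAtMost subset_vecs_on_iff)
qed

lemma rank_le_and_full: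
  assumes "subspace K" "heard K \<subseteq> {1..n}"
  shows "rank K \<le> n" and "rank K = n \<Longrightarrow> {1..n} \<subseteq> decoded K"
proof -
  have K: "K \<subseteq> vecs_on n" using assms(2) by (simp add: subset_vecs_on_iff)
  obtain B where B: "B \<subseteq> K" "lin_indep B" "rank K = card B"
    using rank_max_lin_indep(1)[OF assms(1) K] by blast
  show "rank K \<le> n" using lin_indep_card_le(1)[OF assms(1) K B(1,2)] B(3) by simp
  assume "rank K = n"
  then have "vecs_on n \<subseteq> K" using lin_indep_card_le(2)[OF assms(1) K B(1,2)] B(3) by simp
  moreover have "unitv j \<in> vecs_on n" if "j \<in> {1..n}" for j
    using that by (simp add: vecs_on_def)
  ultimately show "{1..n} \<subseteq> decoded K" by (auto simp: decoded_def)
qed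

section \<open>The transmissions of the coding module\<close>

lemma first_nonempty_SomeD: "first_nonempty As = Some A \<Longrightarrow> A \<in> set As \<and> A \<noteq> {}"
  by (induction As) (auto split: if_splits)

lemma Min_in_subset: "A \<subseteq> R \<Longrightarrow> finite R \<Longrightarrow> A \<noteq> {} \<Longrightarrow> Min A \<in> A"
  using Min_in finite_subset by blast

lemma case1_at_most_one_outside:
  assumes "case1 [S1, S2, S3, S4, S5, S6] = Some w"
    and R: "S2 \<union> S3 \<union> S4 \<union> S5 \<union> S6 \<subseteq> R" "finite R" and A: "S2 \<union> S3 \<subseteq> A"
  shows "supp w \<subseteq> R \<and> at_most_one_outside A w"
proof -
  have Min: "Min X \<in> X" if "X \<in> {S2, S3, S4, S5, S6}" "X \<noteq> {}" for X
    using that R Min_in_subset[of X R] by blast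
  consider (S2S4) "S2 \<noteq> {}" "S4 \<noteq> {}" "w = vadd (unitv (Min S2)) (unitv (Min S4))"
    | (S3S4) "S3 \<noteq> {}" "S4 \<noteq> {}" "w = vadd (unitv (Min S3)) (unitv (Min S4))"
    | (single) X where "X \<in> {S2, S3, S4, S5, S6}" "X \<noteq> {}" "w = unitv (Min X)"
    using assms(1) first_nonempty_SomeD[of "[S5, S6, S2, S3, S4]"]
    by (auto simp: case1_def split: if_splits option.splits simp del: first_nonempty.simps)
  then show ?thesis
  proof cases
    case S2S4
    then show ?thesis using Min[of S2] Min[of S4] R A supp_unitv_unitv
      by (intro conjI at_most_one_outside_pair) blast+
  next
    case S3S4
    then show ?thesis using Min[of S3] Min[of S4] R A supp_unitv_unitv
      by (intro conjI at_most_one_outside_pair) blast+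
  next
    case single
    then show ?thesis using Min[of X] R by (auto intro: at_most_one_outside_single)
  qed
qed

text \<open>Only supports matter below, so the choice of the coefficient c in Case 3 is forgotten.\<close>
lemma transmission_cases:
  fixes s :: state and arr :: bool
  defines "S \<equiv> Sets s arr" and "q \<equiv> mm s + 1"
  assumes "Some w \<in> transmissions s arr"
  shows "case1 S = Some w \<or> w = unitv q
    \<or> (q \<in> S!0 \<and> (\<exists>w0. case1 S = Some w0 \<and> w = vadd (unitv q) w0))
    \<or> (q \<in> S!1 \<union> S!2 \<and> (\<exists>A c. first_nonempty [S!3, S!4, S!5] = Some A \<and>
          w = vadd (unitv q) (smul c (unitv (Min A)))))
    \<or> (q \<in> S!3 \<and> (\<exists>A. first_nonempty [S!1, S!2, S!5] = Some A \<and>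
          w = vadd (unitv q) (unitv (Min A))))"
  using assms(3) unfolding transmissions_def Let_def S_def[symmetric] q_def[symmetric]
  by (auto split: if_splits option.splits simp del: first_nonempty.simps intro: exI[of _ 1])

text \<open>Here DN \<inter> (HD - DD) is the set S_2; the second alternative arises only in Case 5.\<close>
lemma transmission_at_most_one_outside:
  fixes s :: state and arr :: bool
  defines "DN \<equiv> decoded (know s (lN s))" and "DD \<equiv> decoded (know s (lD s))"
    and "HD \<equiv> heard (know s (lD s))" and "R \<equiv> {1..mm s + 1}"
  assumes HN: "heard (know s (lN s)) \<subseteq> R" and HD: "HD \<subseteq> R"
    and w: "Some w \<in> transmissions s arr"
  shows "supp w \<subseteq> R \<and>
    (at_most_one_outside DN w \<or> (DN \<inter> (HD - DD) = {} \<and> at_most_one_outside DD w))"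
proof -
  define S where "S = Sets s arr"
  define q where "q = mm s + 1"
  have "DN \<subseteq> R" "DD \<subseteq> HD"
    using HN decoded_subset_heard unfolding DN_def DD_def HD_def by blast+
  then have R: "set S \<subseteq> Pow R" "finite R" "q \<in> R"
    using HD unfolding S_def Sets_def Let_def DN_def DD_def HD_def R_def q_def by auto
  have S: "S!0 \<union> S!1 \<union> S!2 \<subseteq> DN" "S!3 \<subseteq> DD" "S!1 = DN \<inter> (HD - DD)"
    "set [S!3, S!4, S!5] \<subseteq> set S" "set [S!1, S!2, S!5] \<subseteq> set S"
    unfolding S_def Sets_def Let_def DN_def DD_def HD_def by auto
  have fn: "Min A \<in> A \<and> Min A \<in> R" if "first_nonempty Xs = Some A" "set Xs \<subseteq> set S" for Xs A
    using first_nonempty_SomeD[OF that(1)] that(2) R Min_in_subset[of A R] by blast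
  have c1: "supp w0 \<subseteq> R \<and> at_most_one_outside DN w0" if "case1 S = Some w0" for w0
    using case1_at_most_one_outside[of "S!0" "S!1" "S!2" "S!3" "S!4" "S!5" w0 R DN] that R S
    unfolding S_def Sets_def Let_def by auto
  have pair: "supp w' \<subseteq> R \<and> at_most_one_outside X w'"
    if "supp w' \<subseteq> {q, b}" "b \<in> R" "q \<in> X \<or> b \<in> X" for w' b X
    using that R(3) by (auto intro: at_most_one_outside_pair)
  from transmission_cases[OF w, folded S_def q_def] show ?thesis
  proof (elim disjE exE conjE)
    fix w0 assume "q \<in> S!0" "case1 S = Some w0" "w = vadd (unitv q) w0"
    then show ?thesis
      using c1 S(1) R(3) supp_vadd_unitv[of q w0] at_most_one_outside_vadd_unitv[of DN w0 q] by blast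
  next
    fix A c assume "q \<in> S!1 \<union> S!2" "first_nonempty [S!3, S!4, S!5] = Some A"
      and "w = vadd (unitv q) (smul c (unitv (Min A)))"
    then show ?thesis using pair[OF supp_unitv_pair] fn S(1,4) by blast
  next
    fix A assume q: "q \<in> S!3" and A: "first_nonempty [S!1, S!2, S!5] = Some A"
      and w: "w = vadd (unitv q) (unitv (Min A))"
    have b: "Min A \<in> A" "Min A \<in> R" using fn[OF A S(5)] by simp_all
    note pair_w = pair[OF supp_unitv_unitv b(2), folded w]
    consider "S!1 = {}" "S!2 = {}" | "A = S!1 \<or> A = S!2"
      using A by (auto split: if_splits)
    then show ?thesis
    proof cases
      case 1
      then show ?thesis using pair_w q S(2,3) by blast
    next
      case 2
      then show ?thesis using pair_w b(1) S(1) by blast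
    qed
  qed (use c1 R(3) in \<open>auto intro: at_most_one_outside_single\<close>)
qed

section \<open>Invariance under a slot\<close>

lemma receive_basics:
  assumes "K' = K \<or> K' = lspan (insert w K)" "subspace K"
  shows "subspace K'" "K \<subseteq> K'" "heard K' \<subseteq> heard K \<union> supp w"
  using assms subspace_lspan lspan_superset[of "insert w K"] by auto

lemma one_pure_after_broadcast:
  assumes KN: "subspace KN" "finite (heard KN)" and KD: "subspace KD"
    and pureN: "heard KN \<subseteq> decoded KN"
    and joint: "heard (lspan (KN \<union> KD)) \<subseteq> decoded (lspan (KN \<union> KD))"
    and KN': "KN' = KN \<or> KN' = lspan (insert w KN)" and KD': "KD' = KD \<or> KD' = lspan (insert w KD)"
    and "finite (supp w)"
    and w: "at_most_one_outside (decoded KN) w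
      \<or> (decoded KN \<inter> (heard KD - decoded KD) = {} \<and> at_most_one_outside (decoded KD) w)"
  shows "heard KN' \<subseteq> decoded KN' \<or> heard KD' \<subseteq> decoded KD'"
  using w
proof (elim disjE conjE)
  assume "at_most_one_outside (decoded KN) w"
  then have "at_most_one_outside (heard KN) w"
    by (rule at_most_one_outside_mono[OF _ decoded_subset_heard])
  from pure_lspan_insert[OF pureN \<open>finite (supp w)\<close> this]
  have "heard KN' \<subseteq> decoded KN'" using KN' pureN by (elim disjE) simp_all
  then show ?thesis ..
next
  assume "decoded KN \<inter> (heard KD - decoded KD) = {}" "at_most_one_outside (decoded KD) w"
  from this(1) have pureD: "heard KD \<subseteq> decoded KD"
    by (rule pure_if_decoded_disjoint_unsolved[OF KN(1) KD pureN KN(2) joint])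
  have "at_most_one_outside (heard KD) w"
    using \<open>at_most_one_outside (decoded KD) w\<close> by (rule at_most_one_outside_mono[OF _ decoded_subset_heard])
  from pure_lspan_insert[OF pureD \<open>finite (supp w)\<close> this]
  have "heard KD' \<subseteq> decoded KD'" using KD' pureD by (elim disjE) simp_all
  then show ?thesis ..
qed

lemma perm3_cases:
  assumes "{l, n, d} = {1, 2, 3 :: nat}" and "{l', n', d'} = {1, 2, 3}"
  shows "n' = l \<or> d' = l \<or> (n' = n \<and> d' = d) \<or> (n' = d \<and> d' = n)"
proof -
  have "n' \<noteq> d'"
  proof
    assume "n' = d'"
    then have "card {l', n', d'} \<le> 2" by (simp add: card_insert_if)
    then show False using assms(2) by simp
  qed
  moreover have "n' \<in> {l, n, d}" "d' \<in> {l, n, d}" using assms by blast+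
  ultimately show ?thesis by blast
qed

lemma max_rank_bounds:
  fixes K :: "nat \<Rightarrow> vec set"
  defines "m' \<equiv> Max ((\<lambda>i. rank (K i)) ` {1, 2, 3})"
  assumes K: "\<forall>i\<in>{1, 2, 3}. subspace (K i) \<and> heard (K i) \<subseteq> {1..m + 1}"
    and l: "l \<in> {1, 2, 3}" "{1..m} \<subseteq> decoded (K l)"
  shows "m \<le> m'" and "\<exists>i\<in>{1, 2, 3}. {1..m'} \<subseteq> decoded (K i)"
proof -
  obtain i where i: "i \<in> {1, 2, 3}" "m' = rank (K i)"
    unfolding m'_def using Max_in[of "(\<lambda>i. rank (K i)) ` {1, 2, 3}"] by auto
  have "m \<le> rank (K l)" using rank_ge_if_prefix_decoded K l by blast
  also have "rank (K l) \<le> m'" unfolding m'_def using l(1) by (intro Max_ge) auto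
  finally show "m \<le> m'" .
  have "m' \<le> m + 1" using rank_le_and_full(1) K i by auto
  show "\<exists>i\<in>{1, 2, 3}. {1..m'} \<subseteq> decoded (K i)"
  proof (cases "m' = m + 1")
    case True
    then show ?thesis using rank_le_and_full(2) K i by metis
  next
    case False
    then have "m' = m" using \<open>m \<le> m'\<close> \<open>m' \<le> m + 1\<close> by simp
    then show ?thesis using l by blast
  qed
qed

lemma labels_okD:
  assumes "labels_ok K m l n d" and "i \<in> {1, 2, 3}" "{1..m} \<subseteq> decoded (K i)"
  shows "{l, n, d} = {1, 2, 3}" and "{1..m} \<subseteq> decoded (K l)"
    and "heard (K d) \<subseteq> decoded (K d) \<Longrightarrow> heard (K n) \<subseteq> decoded (K n)"
proof -
  define C where "C = {i \<in> {1, 2, 3}. {1..m} \<subseteq> decoded (K i)}"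
  have "C \<noteq> {}" "finite C" using assms(2,3) unfolding C_def by auto
  then have "Min C \<in> C" by (rule Min_in[rotated])
  moreover have "l = Min C" using assms(1) \<open>C \<noteq> {}\<close> unfolding labels_ok_def C_def Let_def by blast
  ultimately show "{1..m} \<subseteq> decoded (K l)" unfolding C_def by simp
  show "{l, n, d} = {1, 2, 3}" using assms(1) unfolding labels_ok_def by blast
  show "heard (K d) \<subseteq> decoded (K d) \<Longrightarrow> heard (K n) \<subseteq> decoded (K n)"
    using assms(1) unfolding labels_ok_def unsolved_empty_iff by blast
qed

lemma purity_after_broadcast:
  fixes K K' :: "nat \<Rightarrow> vec set"
  assumes lab: "{L, N, D} = {1, 2, 3}"
    and K: "\<forall>i\<in>{1, 2, 3}. subspace (K i) \<and> heard (K i) \<subseteq> {1..m + 1}"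
    and pureN: "heard (K N) \<subseteq> decoded (K N)"
    and joint: "heard (lspan (K N \<union> K D)) \<subseteq> decoded (lspan (K N \<union> K D))"
    and recv: "\<forall>i. K' i = K i \<or> K' i = lspan (insert w (K i))"
    and w: "supp w \<subseteq> {1..m + 1}"
      "at_most_one_outside (decoded (K N)) w
        \<or> (decoded (K N) \<inter> (heard (K D) - decoded (K D)) = {} \<and> at_most_one_outside (decoded (K D)) w)"
  shows "\<forall>i\<in>{1, 2, 3}. subspace (K' i) \<and> heard (K' i) \<subseteq> {1..m + 1} \<and> K i \<subseteq> K' i"
    and "heard (K' N) \<subseteq> decoded (K' N) \<or> heard (K' D) \<subseteq> decoded (K' D)"
    and "heard (lspan (K' N \<union> K' D)) \<subseteq> decoded (lspan (K' N \<union> K' D))"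
proof -
  have "N \<in> {1, 2, 3}" "D \<in> {1, 2, 3}" using lab by blast+
  then have KN: "subspace (K N)" "heard (K N) \<subseteq> {1..m + 1}" and KD: "subspace (K D)" "heard (K D) \<subseteq> {1..m + 1}"
    using K by auto
  have fin: "finite (supp w)" "finite (heard (K N))"
    using w(1) KN(2) finite_subset by auto
  show "\<forall>i\<in>{1, 2, 3}. subspace (K' i) \<and> heard (K' i) \<subseteq> {1..m + 1} \<and> K i \<subseteq> K' i"
  proof
    fix i :: nat assume "i \<in> {1, 2, 3}"
    then have "subspace (K i)" "heard (K i) \<subseteq> {1..m + 1}" using K by auto
    with receive_basics[OF recv[rule_format, of i]] w(1)
    show "subspace (K' i) \<and> heard (K' i) \<subseteq> {1..m + 1} \<and> K i \<subseteq> K' i" by blast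
  qed
  show "heard (K' N) \<subseteq> decoded (K' N) \<or> heard (K' D) \<subseteq> decoded (K' D)"
    using one_pure_after_broadcast[OF KN(1) fin(2) KD(1) pureN joint recv[rule_format] recv[rule_format] fin(1) w(2)] .
  have "at_most_one_outside (heard (K N) \<union> heard (K D)) w"
    using w(2) decoded_subset_heard[of "K N"] decoded_subset_heard[of "K D"]
    by (blast intro: at_most_one_outside_mono)
  then show "heard (lspan (K' N \<union> K' D)) \<subseteq> decoded (lspan (K' N \<union> K' D))"
    using joint_pure_after_broadcast[OF joint recv[rule_format] recv[rule_format] fin(1)] by blast
qed

lemma purity_after_relabel:
  fixes K :: "nat \<Rightarrow> vec set"
  assumes lab: "{L, N, D} = {1, 2, 3}" and lab': "{L', N', D'} = {1, 2, 3}"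
    and K: "\<forall>i\<in>{1, 2, 3}. subspace (K i) \<and> heard (K i) \<subseteq> {1..m + 1}"
    and decL: "{1..m} \<subseteq> decoded (K L)"
    and one_pure: "heard (K N) \<subseteq> decoded (K N) \<or> heard (K D) \<subseteq> decoded (K D)"
    and joint: "heard (lspan (K N \<union> K D)) \<subseteq> decoded (lspan (K N \<union> K D))"
    and prefer_N: "heard (K D') \<subseteq> decoded (K D') \<Longrightarrow> heard (K N') \<subseteq> decoded (K N')"
  shows "heard (K N') \<subseteq> decoded (K N')"
    and "heard (lspan (K N' \<union> K D')) \<subseteq> decoded (lspan (K N' \<union> K D'))"
proof -
  have L: "L \<in> {1, 2, 3}" and N'D': "N' \<in> {1, 2, 3}" "D' \<in> {1, 2, 3}" using lab lab' by blast+
  then have pureL: "heard (K L) \<subseteq> decoded (K L)"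
    using heard_subset_decoded_if_prefix_decoded K decL by blast
  consider "N' = L \<or> D' = L" | "(N' = N \<and> D' = D) \<or> (N' = D \<and> D' = N)"
    using perm3_cases[OF lab lab'] by blast
  then show "heard (K N') \<subseteq> decoded (K N')"
    using pureL one_pure prefer_N by cases auto
  show "heard (lspan (K N' \<union> K D')) \<subseteq> decoded (lspan (K N' \<union> K D'))"
  proof (cases "N' = L \<or> D' = L")
    case True
    have "K L \<subseteq> lspan (K N' \<union> K D')" using True lspan_superset by blast
    then have "{1..m} \<subseteq> decoded (lspan (K N' \<union> K D'))" using decL decoded_mono by blast
    moreover have "heard (lspan (K N' \<union> K D')) \<subseteq> {1..m + 1}" using K N'D' by auto
    ultimately show ?thesis
      using heard_subset_decoded_if_prefix_decoded[OF subspace_lspan] by blast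
  next
    case False
    then have "(N' = N \<and> D' = D) \<or> (N' = D \<and> D' = N)" using perm3_cases[OF lab lab'] by blast
    then show ?thesis using joint by (auto simp: Un_commute)
  qed
qed

definition coding_invariant :: "state \<Rightarrow> bool" where
  "coding_invariant s \<longleftrightarrow>
     {lL s, lN s, lD s} = {1, 2, 3} \<and>
     (\<forall>i\<in>{1, 2, 3}. subspace (know s i) \<and> heard (know s i) \<subseteq> {1..mm s + 1}) \<and>
     {1..mm s} \<subseteq> decoded (know s (lL s)) \<and>
     heard (know s (lN s)) \<subseteq> decoded (know s (lN s)) \<and>
     heard (lspan (know s (lN s) \<union> know s (lD s)))
       \<subseteq> decoded (lspan (know s (lN s) \<union> know s (lD s)))"

lemma coding_invariant_init: "coding_invariant init_state"
  unfolding coding_invariant_def init_state_def using subspace_lspan by auto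

lemma step_broadcasts_one_combination:
  assumes "step arr rcv s s'"
    and "heard (know s (lN s)) \<subseteq> {1..mm s + 1}" "heard (know s (lD s)) \<subseteq> {1..mm s + 1}"
  obtains w where "\<forall>i. know s' i = know s i \<or> know s' i = lspan (insert w (know s i))"
    and "supp w \<subseteq> {1..mm s + 1}"
    and "at_most_one_outside (decoded (know s (lN s))) w
      \<or> (decoded (know s (lN s)) \<inter> (heard (know s (lD s)) - decoded (know s (lD s))) = {}
         \<and> at_most_one_outside (decoded (know s (lD s))) w)"
proof -
  obtain v where v: "v \<in> transmissions s (mm s + 1 \<le> arr)"
    and K': "know s' = (\<lambda>i. case v of None \<Rightarrow> know s i
               | Some w \<Rightarrow> if rcv i then lspan (insert w (know s i)) else know s i)"
    using assms(1) unfolding step_def by blast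
  show thesis
  proof (cases v)
    \<comment> \<open>a silent slot acts like broadcasting the zero combination\<close>
    case None
    then show ?thesis using that[of zerov] K' by (simp add: at_most_one_outside_def)
  next
    case (Some w)
    then show ?thesis
      using that[of w] K' transmission_at_most_one_outside[of s w] v assms(2,3) by auto
  qed
qed

lemma coding_invariant_step:
  assumes inv: "coding_invariant s" and step: "step arr rcv s s'"
  shows "coding_invariant s'"
proof -
  have lab: "{lL s, lN s, lD s} = {1, 2, 3}"
    and K: "\<forall>i\<in>{1, 2, 3}. subspace (know s i) \<and> heard (know s i) \<subseteq> {1..mm s + 1}"
    and decL: "{1..mm s} \<subseteq> decoded (know s (lL s))"
    and pureN: "heard (know s (lN s)) \<subseteq> decoded (know s (lN s))"
    and joint: "heard (lspan (know s (lN s) \<union> know s (lD s)))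
       \<subseteq> decoded (lspan (know s (lN s) \<union> know s (lD s)))"
    using inv unfolding coding_invariant_def by blast+
  have "lL s \<in> {1, 2, 3}" "lN s \<in> {1, 2, 3}" "lD s \<in> {1, 2, 3}" using lab by blast+
  then obtain w where recv: "\<forall>i. know s' i = know s i \<or> know s' i = lspan (insert w (know s i))"
    and w: "supp w \<subseteq> {1..mm s + 1}"
      "at_most_one_outside (decoded (know s (lN s))) w
        \<or> (decoded (know s (lN s)) \<inter> (heard (know s (lD s)) - decoded (know s (lD s))) = {}
           \<and> at_most_one_outside (decoded (know s (lD s))) w)"
    using step_broadcasts_one_combination[OF step] K by metis
  note after = purity_after_broadcast[OF lab K pureN joint recv w]
  have K': "\<forall>i\<in>{1, 2, 3}. subspace (know s' i) \<and> heard (know s' i) \<subseteq> {1..mm s + 1}"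
    using after(1) by blast
  have decL': "{1..mm s} \<subseteq> decoded (know s' (lL s))"
    using decL after(1) \<open>lL s \<in> {1, 2, 3}\<close> decoded_mono by blast
  from step have m': "mm s' = Max ((\<lambda>i. rank (know s' i)) ` {1, 2, 3})"
    and lab': "labels_ok (know s') (mm s') (lL s') (lN s') (lD s')"
    unfolding step_def by blast+
  have "mm s \<le> mm s'" and "\<exists>i\<in>{1, 2, 3}. {1..mm s'} \<subseteq> decoded (know s' i)"
    using max_rank_bounds[OF K' \<open>lL s \<in> {1, 2, 3}\<close> decL'] by (simp_all add: m')
  then obtain i where "i \<in> {1, 2, 3}" "{1..mm s'} \<subseteq> decoded (know s' i)" by blast
  note relabel = labels_okD[OF lab' this]
  have "heard (know s' (lN s')) \<subseteq> decoded (know s' (lN s'))"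
    and "heard (lspan (know s' (lN s') \<union> know s' (lD s')))
       \<subseteq> decoded (lspan (know s' (lN s') \<union> know s' (lD s')))"
    using purity_after_relabel[OF lab relabel(1) K' decL' after(2,3) relabel(3)] by blast+
  moreover have "\<forall>i\<in>{1, 2, 3}. subspace (know s' i) \<and> heard (know s' i) \<subseteq> {1..mm s' + 1}"
    using K' \<open>mm s \<le> mm s'\<close> by fastforce
  ultimately show ?thesis unfolding coding_invariant_def using relabel(1,2) by blast
qed

theorem theorem12:
  fixes arrived :: "nat \<Rightarrow> nat" and rcv :: "nat \<Rightarrow> nat \<Rightarrow> bool"
    and st :: "nat \<Rightarrow> state" and t :: nat
  assumes "mono arrived"
    and "st 0 = init_state"
    and "\<forall>k. step (arrived k) (rcv k) (st k) (st (Suc k))"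
    and "t > 0"
  shows "unsolved (know (st t) (lN (st t))) = {} \<or> unsolved (know (st t) (lD (st t))) = {}"
proof -
  \<comment> \<open>the invariant holds in every slot, so neither \<open>mono arrived\<close> nor \<open>t > 0\<close> is needed\<close>
  have "coding_invariant (st k)" for k
  proof (induction k)
    case 0
    then show ?case using assms(2) coding_invariant_init by simp
  next
    case (Suc k)
    then show ?case using assms(3) coding_invariant_step by blast
  qed
  then show ?thesis unfolding coding_invariant_def unsolved_empty_iff by blast
qed

end
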